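(* Let $\Sigma$ be a graded alphabet and $t\in T_\Sigma$. Then the sequential subtree automaton $\mathrm{seq}(A_t)$ is isomorphic to the quotient $(A_t)_{\sim_\mathrm{h}}$ of the subtree automaton $A_t$ by the relation $\sim_\mathrm{h}$.
   Context: A graded alphabet is a finite set $\Sigma=\bigcup_{k\in\mathbb{N}}\Sigma_k$; $T_\Sigma$ is the set of trees $f(t_1,\ldots,t_k)$ with $f\in\Sigma_k$. Weights are in $(\mathbb{N},+)$. A RWTA is $A=(\Sigma,Q,\nu,\delta)$ with $Q$ finite, $\nu:Q\to\mathbb{N}$, $\delta\subseteq\bigcup_k Q\times\Sigma_k\times Q^k$; $\delta(f,q_1,\ldots,q_k)=\{q\mid(q,f,q_1,\ldots,q_k)\in\delta\}$. A morphism from $A_1=(\Sigma,Q_1,\nu_1,\delta_1)$ to $A_2=(\Gamma,Q_2,\nu_2,\delta_2)$ is a map $\mu$ sending states of $A_1$ to states of $A_2$ and symbols of $\Sigma_k$ to symbols of $\Gamma_k$, such that $(\mu(q),\mu(f),\mu(q_1),\ldots,\mu(q_k))\in\delta_2$ whenever $(q,f,q_1,\ldots,q_k)\in\delta_1$, and $\nu_2(\mu(q))=\nu_1(q)$ for all $q\in Q_1$; it is an isomorphism if it has an inverse $\mu^{-1}$ which is a morphism from $A_2$ to $A_1$. For $t=f(t_1,\ldots,t_k)$, $\mathrm{SubTree}(t)=\{t\}\cup\bigcup_j\mathrm{SubTree}(t_j)$ and $\mathrm{SubTreeSeries}_t=t+\sum_j\mathrm{SubTreeSeries}_{t_j}$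 ($\mathrm{SubTreeSeries}_t(s)$ is the number of nodes of $t$ whose subtree equals $s$). The tree $t^\sharp$ is obtained from $t$ by indexing each symbol occurrence with its position in a preorder traversal (indexed symbols are distinct and keep their arity); $\Sigma_{t^\sharp}$ is the set of indexed symbols; $\mathrm{h}$ erases indices. The subtree automaton $A_t=(\Sigma,Q,\nu,\delta)$ has $Q=\mathrm{SubTree}(t^\sharp)$, $\nu\equiv1$, and for $f\in\Sigma_{t^\sharp}$ of arity $k$: $t_{k+1}\in\delta(\mathrm{h}(f),t_1,\ldots,t_k)$ iff $t_{k+1}=f(t_1,\ldots,t_k)$. The relation $\sim_\mathrm{h}$ on $Q$ is $r_1\sim_\mathrm{h}r_2\iff\mathrm{h}(r_1)=\mathrm{h}(r_2)$. The quotient of a RWTA $(\Sigma,Q,\nu,\delta)$ by an equivalence $\sim$ on $Q$ is $(\Sigma,Q_\sim,\nu',\delta')$ with $Q_\sim$ the set of classes, $\nu'(C)=\sum_{q\in C}\nu(q)$, and $C_{k+1}\in\delta'(f,C_1,\ldots,C_k)$ iff there are $q_i\in C_i$ with $q_{k+1}\in\delta(f,q_1,\ldots,q_k)$. The sequential subtree automaton is $\mathrm{seq}(A_t)=(\Sigma,\mathrm{SubTree}(t),\nu'',\delta'')$ with $\nu''(t')=\mathrm{SubTreeSeries}_t(t')$ and, for $f\in\Sigma_k$, $t_{k+1}\in\delta''(f,t_1,\ldots,t_k)$ iff $t_{k+1}=f(t_1,\ldots,t_k)$. *)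

theory Defs
  imports Main
begin

text \<open>Ranked trees. A graded alphabet is a finite set of pairs (symbol, arity):
  f is in Sigma_k iff (f,k) is in the alphabet.\<close>

datatype 'f tree = Node 'f "'f tree list"

fun wf_tree :: "('f \<times> nat) set \<Rightarrow> 'f tree \<Rightarrow> bool" where
  "wf_tree Sig (Node f ts) = ((f, length ts) \<in> Sig \<and> (\<forall>u\<in>set ts. wf_tree Sig u))"

fun subtrees :: "'f tree \<Rightarrow> 'f tree set" where
  "subtrees (Node f ts) = insert (Node f ts) (\<Union>u\<in>set ts. subtrees u)"

fun subtree_series :: "'f tree \<Rightarrow> 'f tree \<Rightarrow> nat" where
  "subtree_series (Node f ts) s =
     (if Node f ts = s then 1 else 0) + sum_list (map (\<lambda>u. subtree_series u s) ts)"

fun nodes :: "'f tree \<Rightarrow> nat" where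
  "nodes (Node f ts) = Suc (sum_list (map nodes ts))"

fun index_tree :: "nat \<Rightarrow> 'f tree \<Rightarrow> ('f \<times> nat) tree"
and index_list :: "nat \<Rightarrow> 'f tree list \<Rightarrow> ('f \<times> nat) tree list" where
  "index_tree n (Node f ts) = Node (f, n) (index_list (Suc n) ts)"
| "index_list n [] = []"
| "index_list n (u # us) = index_tree n u # index_list (n + nodes u) us"

definition sharp :: "'f tree \<Rightarrow> ('f \<times> nat) tree" where
  "sharp t = index_tree 0 t"

fun symbols :: "'f tree \<Rightarrow> ('f \<times> nat) set" where
  "symbols (Node f ts) = insert (f, length ts) (\<Union>u\<in>set ts. symbols u)"

definition h :: "('f \<times> nat) tree \<Rightarrow> 'f tree" where
  "h r = map_tree fst r"

record ('s, 'q) rwta =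
  alph :: "('s \<times> nat) set"
  states :: "'q set"
  weight :: "'q \<Rightarrow> nat"
  trans :: "('q \<times> 's \<times> 'q list) set"

definition morphism ::
  "('s, 'q) rwta \<Rightarrow> ('g, 'p) rwta \<Rightarrow> ('q \<Rightarrow> 'p) \<Rightarrow> ('s \<Rightarrow> 'g) \<Rightarrow> bool" where
  "morphism A1 A2 muQ muS \<longleftrightarrow>
     (\<forall>q\<in>states A1. muQ q \<in> states A2) \<and>
     (\<forall>(f, k)\<in>alph A1. (muS f, k) \<in> alph A2) \<and>
     (\<forall>(q, f, qs)\<in>trans A1. (muQ q, muS f, map muQ qs) \<in> trans A2) \<and>
     (\<forall>q\<in>states A1. weight A2 (muQ q) = weight A1 q)"

definition isomorphism ::
  "('s, 'q) rwta \<Rightarrow> ('g, 'p) rwta \<Rightarrow> ('q \<Rightarrow> 'p) \<Rightarrow> ('s \<Rightarrow> 'g) \<Rightarrow> bool" where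
  "isomorphism A1 A2 muQ muS \<longleftrightarrow>
     morphism A1 A2 muQ muS \<and>
     (\<exists>nuQ nuS. morphism A2 A1 nuQ nuS \<and>
        (\<forall>q\<in>states A1. nuQ (muQ q) = q) \<and> (\<forall>p\<in>states A2. muQ (nuQ p) = p) \<and>
        (\<forall>f\<in>fst ` alph A1. nuS (muS f) = f) \<and> (\<forall>g\<in>fst ` alph A2. muS (nuS g) = g))"

definition isomorphic :: "('s, 'q) rwta \<Rightarrow> ('g, 'p) rwta \<Rightarrow> bool" where
  "isomorphic A1 A2 \<longleftrightarrow> (\<exists>muQ muS. isomorphism A1 A2 muQ muS)"

definition subtree_aut :: "('f \<times> nat) set \<Rightarrow> 'f tree \<Rightarrow> ('f, ('f \<times> nat) tree) rwta" where
  "subtree_aut Sig t =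
     \<lparr> alph = Sig,
       states = subtrees (sharp t),
       weight = (\<lambda>_. 1),
       trans = {(s, fst f, ts) | s f ts.
                  (f, length ts) \<in> symbols (sharp t) \<and>
                  s \<in> subtrees (sharp t) \<and> set ts \<subseteq> subtrees (sharp t) \<and>
                  s = Node f ts} \<rparr>"

definition sim_h :: "('f \<times> nat) tree set \<Rightarrow> (('f \<times> nat) tree \<times> ('f \<times> nat) tree) set" where
  "sim_h Q = {(r1, r2). r1 \<in> Q \<and> r2 \<in> Q \<and> h r1 = h r2}"

definition quotient_aut :: "('s, 'q) rwta \<Rightarrow> ('q \<times> 'q) set \<Rightarrow> ('s, 'q set) rwta" where
  "quotient_aut A R =
     \<lparr> alph = alph A,
       states = states A // R,
       weight = (\<lambda>C. \<Sum>q\<in>C. weight A q),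
       trans = {(C, f, Cs) | C f Cs.
                  C \<in> states A // R \<and> set Cs \<subseteq> states A // R \<and>
                  (\<exists>q qs. q \<in> C \<and> list_all2 (\<in>) qs Cs \<and> (q, f, qs) \<in> trans A)} \<rparr>"

definition seq_aut :: "('f \<times> nat) set \<Rightarrow> 'f tree \<Rightarrow> ('f, 'f tree) rwta" where
  "seq_aut Sig t =
     \<lparr> alph = Sig,
       states = subtrees t,
       weight = subtree_series t,
       trans = {(s, f, ts) | s f ts.
                  (f, length ts) \<in> Sig \<and>
                  s \<in> subtrees t \<and> set ts \<subseteq> subtrees t \<and>
                  s = Node f ts} \<rparr>"

end

theory Submission
  imports Defs "HOL-Library.Multiset"
begin

text \<open>Erasing indices maps the subtrees of t\<sharp> onto those of t, and two states of A_t are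
  \<sim>_h-equivalent exactly when they have the same erasure; so the \<sim>_h-classes are the fibres of h
  over SubTree(t), and both automata have "the same" transitions. For the weights: every node of
  t\<sharp> carries its own index, so each indexed subtree occurs exactly once in t\<sharp>, and the
  fibre over s has as many elements as t has nodes with subtree s.\<close>

fun subtree_mset :: "'a tree \<Rightarrow> 'a tree multiset" where
  "subtree_mset (Node f ts) = add_mset (Node f ts) (\<Sum>u\<leftarrow>ts. subtree_mset u)"

fun root :: "'a tree \<Rightarrow> 'a" where
  "root (Node a ts) = a"

lemma count_sum_list: "count (\<Sum>x\<leftarrow>xs. M x) y = (\<Sum>x\<leftarrow>xs. count (M x) y)"
  by (induction xs) auto

lemma image_mset_sum_list: "image_mset f (\<Sum>x\<leftarrow>xs. M x) = (\<Sum>x\<leftarrow>xs. image_mset f (M x))"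
  by (induction xs) auto

lemma count_subtree_mset: "count (subtree_mset t) s = subtree_series t s"
  by (induction t) (auto simp: count_sum_list intro!: arg_cong[where f = sum_list])

lemma set_subtree_mset: "set_mset (subtree_mset t) = subtrees t"
  by (induction t) auto

lemma subtree_mset_map_tree: "subtree_mset (map_tree g t) = image_mset (map_tree g) (subtree_mset t)"
  by (induction t) (auto simp: image_mset_sum_list o_def intro!: arg_cong[where f = sum_list])

lemma subtrees_map_tree: "subtrees (map_tree g t) = map_tree g ` subtrees t"
  by (induction t) auto

lemma child_in_subtrees: "Node f ts \<in> subtrees t \<Longrightarrow> u \<in> set ts \<Longrightarrow> u \<in> subtrees t"
proof (induction t)
  case (Node g us)
  then show ?case by (cases u) fastforce
qed

lemma symbol_in_symbols: "Node f ts \<in> subtrees t \<Longrightarrow> (f, length ts) \<in> symbols t"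
  by (induction t) auto

lemma wf_tree_subtree: "wf_tree Sig t \<Longrightarrow> s \<in> subtrees t \<Longrightarrow> wf_tree Sig s"
  by (induction t) auto

lemma h_eq_map_tree_fst: "h = map_tree fst"
  by (simp add: h_def fun_eq_iff)

lemma h_Node: "h (Node f ts) = Node (fst f) (map h ts)"
  by (simp add: h_eq_map_tree_fst)

lemma h_index_tree:
  fixes t :: "'a tree" and ts :: "'a tree list"
  shows "h (index_tree n t) = t" and "map h (index_list n ts) = ts"
  by (induction n t and n ts rule: index_tree_index_list.induct) (auto simp: h_Node)

lemma h_sharp: "h (sharp t) = t"
  by (simp add: sharp_def h_index_tree)

lemma h_image_subtrees_sharp: "h ` subtrees (sharp t) = subtrees t"
  using subtrees_map_tree[of fst "sharp t"] by (simp add: h_sharp flip: h_eq_map_tree_fst)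

lemma indices_subtree_mset_index_tree:
  fixes t :: "'a tree" and ts :: "'a tree list"
  shows "image_mset (snd \<circ> root) (subtree_mset (index_tree n t)) = mset [n..<n + nodes t]"
    and "image_mset (snd \<circ> root) (\<Sum>u\<leftarrow>index_list n ts. subtree_mset u)
           = mset [n..<n + (\<Sum>u\<leftarrow>ts. nodes u)]"
proof (induction n t and n ts rule: index_tree_index_list.induct)
  case (1 n f ts)
  have "image_mset (snd \<circ> root) (subtree_mset (index_tree n (Node f ts)))
      = add_mset n (image_mset (snd \<circ> root) (\<Sum>u\<leftarrow>index_list (Suc n) ts. subtree_mset u))"
    by simp
  also have "\<dots> = mset (n # [Suc n..<Suc n + (\<Sum>u\<leftarrow>ts. nodes u)])"
    by (simp only: 1 mset.simps)
  also have "n # [Suc n..<Suc n + (\<Sum>u\<leftarrow>ts. nodes u)] = [n..<n + nodes (Node f ts)]"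
    by (simp only: nodes.simps add_Suc_shift add_Suc_right) (rule upt_conv_Cons[symmetric], simp)
  finally show ?case .
next
  case (3 n u us)
  have "image_mset (snd \<circ> root) (\<Sum>v\<leftarrow>index_list n (u # us). subtree_mset v)
      = image_mset (snd \<circ> root) (subtree_mset (index_tree n u))
        + image_mset (snd \<circ> root) (\<Sum>v\<leftarrow>index_list (n + nodes u) us. subtree_mset v)"
    by simp
  also have "\<dots> = mset ([n..<n + nodes u] @ [n + nodes u..<n + nodes u + (\<Sum>v\<leftarrow>us. nodes v)])"
    by (simp only: 3 mset_append)
  also have "[n..<n + nodes u] @ [n + nodes u..<n + nodes u + (\<Sum>v\<leftarrow>us. nodes v)]
      = [n..<n + (\<Sum>v\<leftarrow>u # us. nodes v)]"
    by (simp only: sum_list.Cons list.map add.assoc[symmetric]) (rule upt_add_eq_append[symmetric], simp)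
  finally show ?case .
qed simp

lemma count_subtree_mset_sharp_le_1: "count (subtree_mset (sharp t)) r \<le> 1"
proof -
  let ?M = "subtree_mset (sharp t)"
  have "count ?M r \<le> count (image_mset (snd \<circ> root) ?M) ((snd \<circ> root) r)"
  proof (cases "r \<in># ?M")
    case True
    then show ?thesis
      unfolding count_image_mset' by (intro member_le_sum) auto
  qed (simp add: not_in_iff)
  also have "\<dots> \<le> 1"
    unfolding sharp_def indices_subtree_mset_index_tree by (simp add: count_mset_set')
  finally show ?thesis .
qed

lemma count_image_mset_eq_card:
  assumes "\<And>y. count M y \<le> 1"
  shows "count (image_mset f M) x = card {y \<in> set_mset M. f y = x}"
proof -
  have "count (image_mset f M) x = (\<Sum>y | y \<in># M \<and> x = f y. count M y)"
    by (rule count_image_mset')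
  also have "\<dots> = (\<Sum>y | y \<in># M \<and> x = f y. 1)"
    using assms by (intro sum.cong) (auto intro: antisym simp: Suc_le_eq)
  finally show ?thesis
    by (simp add: eq_commute conj_commute)
qed

definition h_class :: "('f \<times> nat) tree set \<Rightarrow> 'f tree \<Rightarrow> ('f \<times> nat) tree set" where
  "h_class Q s = {r \<in> Q. h r = s}"

lemma card_h_class_subtrees_sharp:
  "card (h_class (subtrees (sharp t)) s) = subtree_series t s"
proof -
  have "subtree_series t s = count (image_mset h (subtree_mset (sharp t))) s"
    using subtree_mset_map_tree[of fst "sharp t"]
    by (simp add: h_sharp flip: count_subtree_mset h_eq_map_tree_fst)
  also have "\<dots> = card (h_class (subtrees (sharp t)) s)"
    by (simp add: count_image_mset_eq_card[OF count_subtree_mset_sharp_le_1] set_subtree_mset h_class_def)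
  finally show ?thesis ..
qed

lemma quotient_sim_h: "Q // sim_h Q = h_class Q ` h ` Q"
proof -
  have "sim_h Q `` {r} = h_class Q (h r)" if "r \<in> Q" for r
    using that by (auto simp: sim_h_def h_class_def)
  then show ?thesis
    unfolding quotient_def by auto
qed

lemma the_elem_h_image_h_class:
  assumes "r \<in> h_class Q s"
  shows "the_elem (h ` h_class Q s) = h r"
  using assms by (intro the_elem_image_unique) (auto simp: h_class_def)

lemma the_elem_h_image_h_class_subtrees_sharp:
  assumes "s \<in> subtrees t"
  shows "the_elem (h ` h_class (subtrees (sharp t)) s) = s"
proof -
  have "s \<in> h ` subtrees (sharp t)"
    using assms by (simp add: h_image_subtrees_sharp)
  then obtain r where "r \<in> subtrees (sharp t)" "h r = s"
    by blast
  then have "r \<in> h_class (subtrees (sharp t)) s"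
    by (simp add: h_class_def)
  with \<open>h r = s\<close> show ?thesis
    by (simp add: the_elem_h_image_h_class)
qed

abbreviation h_quotient_aut :: "('f \<times> nat) set \<Rightarrow> 'f tree \<Rightarrow> ('f, ('f \<times> nat) tree set) rwta" where
  "h_quotient_aut Sig t \<equiv> quotient_aut (subtree_aut Sig t) (sim_h (states (subtree_aut Sig t)))"

lemma states_h_quotient_aut:
  "states (h_quotient_aut Sig t) = h_class (subtrees (sharp t)) ` subtrees t"
  by (simp add: quotient_aut_def subtree_aut_def quotient_sim_h h_image_subtrees_sharp)

lemma weight_h_quotient_aut: "weight (h_quotient_aut Sig t) C = card C"
  by (simp add: quotient_aut_def subtree_aut_def)

lemma alph_h_quotient_aut: "alph (h_quotient_aut Sig t) = Sig"
  by (simp add: quotient_aut_def subtree_aut_def)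

lemma trans_subtree_aut_iff:
  "(q, f, qs) \<in> trans (subtree_aut Sig t) \<longleftrightarrow>
     q \<in> subtrees (sharp t) \<and> (\<exists>g. q = Node g qs \<and> fst g = f)"
  by (auto simp: subtree_aut_def symbol_in_symbols dest: child_in_subtrees)

lemma trans_quotient_aut_iff:
  "(C, f, Cs) \<in> trans (quotient_aut A R) \<longleftrightarrow>
     C \<in> states (quotient_aut A R) \<and> set Cs \<subseteq> states (quotient_aut A R) \<and>
     (\<exists>q qs. q \<in> C \<and> list_all2 (\<in>) qs Cs \<and> (q, f, qs) \<in> trans A)"
  by (simp add: quotient_aut_def)

lemma states_seq_aut: "states (seq_aut Sig t) = subtrees t"
  by (simp add: seq_aut_def)

lemma weight_seq_aut: "weight (seq_aut Sig t) = subtree_series t"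
  by (simp add: seq_aut_def)

lemma alph_seq_aut: "alph (seq_aut Sig t) = Sig"
  by (simp add: seq_aut_def)

lemma trans_seq_aut_iff:
  "(s, f, ts) \<in> trans (seq_aut Sig t) \<longleftrightarrow>
     (f, length ts) \<in> Sig \<and> s \<in> subtrees t \<and> s = Node f ts"
  by (auto simp: seq_aut_def dest: child_in_subtrees)

lemma morphismI:
  assumes "\<And>q. q \<in> states A1 \<Longrightarrow> muQ q \<in> states A2"
    and "\<And>f k. (f, k) \<in> alph A1 \<Longrightarrow> (muS f, k) \<in> alph A2"
    and "\<And>q f qs. (q, f, qs) \<in> trans A1 \<Longrightarrow> (muQ q, muS f, map muQ qs) \<in> trans A2"
    and "\<And>q. q \<in> states A1 \<Longrightarrow> weight A2 (muQ q) = weight A1 q"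
  shows "morphism A1 A2 muQ muS"
  using assms unfolding morphism_def by blast

lemma morphism_seq_aut_h_quotient_aut:
  "morphism (seq_aut Sig t) (h_quotient_aut Sig t) (h_class (subtrees (sharp t))) id"
proof (rule morphismI)
  let ?Q = "subtrees (sharp t)"
  show "h_class ?Q s \<in> states (h_quotient_aut Sig t)" if "s \<in> states (seq_aut Sig t)" for s
    using that by (simp add: states_seq_aut states_h_quotient_aut)
  show "(id f, k) \<in> alph (h_quotient_aut Sig t)" if "(f, k) \<in> alph (seq_aut Sig t)" for f k
    using that by (simp add: alph_seq_aut alph_h_quotient_aut)
  show "weight (h_quotient_aut Sig t) (h_class ?Q s) = weight (seq_aut Sig t) s" for s
    by (simp add: weight_h_quotient_aut weight_seq_aut card_h_class_subtrees_sharp)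
  show "(h_class ?Q s, id f, map (h_class ?Q) ts) \<in> trans (h_quotient_aut Sig t)"
    if "(s, f, ts) \<in> trans (seq_aut Sig t)" for s f ts
  proof -
    have s: "s \<in> subtrees t" "s = Node f ts"
      using that by (auto simp: trans_seq_aut_iff)
    then have ts: "set ts \<subseteq> subtrees t"
      by (auto dest: child_in_subtrees)
    have "s \<in> h ` ?Q"
      using s(1) by (simp add: h_image_subtrees_sharp)
    then obtain r where r: "r \<in> ?Q" "h r = s"
      by blast
    obtain g rs where "r = Node g rs"
      by (cases r)
    with r(2) s(2) have g: "r = Node g rs" "fst g = f" "map h rs = ts"
      by (simp_all add: h_Node)
    have "set rs \<subseteq> ?Q"
      using r(1) g(1) by (auto dest: child_in_subtrees)
    then have "list_all2 (\<in>) rs (map (h_class ?Q) ts)"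
      by (auto simp: list_all2_conv_all_nth h_class_def simp flip: g(3))
    moreover have "(r, f, rs) \<in> trans (subtree_aut Sig t)"
      using r g by (simp add: trans_subtree_aut_iff)
    moreover have "r \<in> h_class ?Q s"
      using r by (simp add: h_class_def)
    moreover have "h_class ?Q s \<in> states (h_quotient_aut Sig t)"
      and "set (map (h_class ?Q) ts) \<subseteq> states (h_quotient_aut Sig t)"
      using s(1) ts by (auto simp: states_h_quotient_aut)
    ultimately show ?thesis
      unfolding trans_quotient_aut_iff id_apply by blast
  qed
qed

lemma morphism_h_quotient_aut_seq_aut:
  assumes "wf_tree Sig t"
  shows "morphism (h_quotient_aut Sig t) (seq_aut Sig t) (\<lambda>C. the_elem (h ` C)) id"
proof (rule morphismI)
  have the_elem_h: "the_elem (h ` C) = h r" if "C \<in> states (h_quotient_aut Sig t)" "r \<in> C" for C r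
    using that by (auto simp: states_h_quotient_aut the_elem_h_image_h_class)
  show "the_elem (h ` C) \<in> states (seq_aut Sig t)" if "C \<in> states (h_quotient_aut Sig t)" for C
    using that by (auto simp: states_seq_aut states_h_quotient_aut
        the_elem_h_image_h_class_subtrees_sharp)
  show "(id f, k) \<in> alph (seq_aut Sig t)" if "(f, k) \<in> alph (h_quotient_aut Sig t)" for f k
    using that by (simp add: alph_seq_aut alph_h_quotient_aut)
  show "weight (seq_aut Sig t) (the_elem (h ` C)) = weight (h_quotient_aut Sig t) C"
    if "C \<in> states (h_quotient_aut Sig t)" for C
    using that by (auto simp: states_h_quotient_aut weight_h_quotient_aut weight_seq_aut
        the_elem_h_image_h_class_subtrees_sharp card_h_class_subtrees_sharp)
  show "(the_elem (h ` C), id f, map (\<lambda>C. the_elem (h ` C)) Cs) \<in> trans (seq_aut Sig t)"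
    if step: "(C, f, Cs) \<in> trans (h_quotient_aut Sig t)" for C f Cs
  proof -
    obtain q qs where q: "q \<in> C" "list_all2 (\<in>) qs Cs" "(q, f, qs) \<in> trans (subtree_aut Sig t)"
      and C: "C \<in> states (h_quotient_aut Sig t)" "set Cs \<subseteq> states (h_quotient_aut Sig t)"
      using step unfolding trans_quotient_aut_iff by blast
    then obtain g where g: "q \<in> subtrees (sharp t)" "q = Node g qs" "fst g = f"
      by (auto simp: trans_subtree_aut_iff)
    have "the_elem (h ` C) = h q"
      using C(1) q(1) by (rule the_elem_h)
    moreover have "map (\<lambda>C. the_elem (h ` C)) Cs = map h qs"
      using C(2) q(2) by (auto simp: list_all2_conv_all_nth intro!: nth_equalityI the_elem_h nth_mem)
    moreover have hq: "h q = Node f (map h qs)"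
      using g by (simp add: h_Node)
    moreover have "h q \<in> subtrees t"
      using g(1) h_image_subtrees_sharp by blast
    moreover have "(f, length qs) \<in> Sig"
      using wf_tree_subtree[OF assms \<open>h q \<in> subtrees t\<close>] hq by simp
    ultimately show ?thesis
      by (simp add: trans_seq_aut_iff)
  qed
qed

theorem proposition7:
  fixes Sig :: "('f \<times> nat) set" and t :: "'f tree"
  assumes "finite Sig" and "wf_tree Sig t"
  shows "isomorphic (seq_aut Sig t)
           (quotient_aut (subtree_aut Sig t) (sim_h (states (subtree_aut Sig t))))"
proof -
  let ?class = "h_class (subtrees (sharp t))"
  let ?erase = "\<lambda>C. the_elem (h ` C)"
  have "\<forall>s\<in>states (seq_aut Sig t). ?erase (?class s) = s"
    and "\<forall>C\<in>states (h_quotient_aut Sig t). ?class (?erase C) = C"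
    by (auto simp: states_seq_aut states_h_quotient_aut the_elem_h_image_h_class_subtrees_sharp)
  with morphism_seq_aut_h_quotient_aut morphism_h_quotient_aut_seq_aut[OF assms(2)]
  show ?thesis
    unfolding isomorphic_def isomorphism_def
    by (intro exI[of _ ?class] exI[of _ id] exI[of _ ?erase] conjI) auto
qed

end
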